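(* Let $M$ be an $m\times n$ matrix over a field with all entries nonzero, where $m<n$. If every maximal ($m\times m$) minor $N$ of $M$ satisfies $\operatorname{crk}N<m$, then $\operatorname{crk}M<m$.
   Context: For a matrix $M$ with nonzero entries, the combinatorial rank $\operatorname{crk}M$ is the minimum of the number of classes of mutually proportional rows of $M$ and the number of classes of mutually proportional columns of $M$. A maximal minor here means the square submatrix formed by some $m$ columns. *)

theory Defs
  imports Main
begin

text \<open>A matrix is represented as a function M :: nat => nat => 'a, restricted to a row
index set R and a column index set C (for an m x n matrix, R = {0..<m}, C = {0..<n};
a maximal minor is obtained by restricting C to a set S of m columns).\<close>

definition rows_prop :: "(nat \<Rightarrow> nat \<Rightarrow> 'a::field) \<Rightarrow> nat set \<Rightarrow> nat \<Rightarrow> nat \<Rightarrow> bool" where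
  "rows_prop M C i i' \<longleftrightarrow> (\<exists>c. \<forall>j\<in>C. M i' j = c * M i j)"

definition cols_prop :: "(nat \<Rightarrow> nat \<Rightarrow> 'a::field) \<Rightarrow> nat set \<Rightarrow> nat \<Rightarrow> nat \<Rightarrow> bool" where
  "cols_prop M R j j' \<longleftrightarrow> (\<exists>c. \<forall>i\<in>R. M i j' = c * M i j)"

definition row_classes :: "(nat \<Rightarrow> nat \<Rightarrow> 'a::field) \<Rightarrow> nat set \<Rightarrow> nat set \<Rightarrow> nat" where
  "row_classes M R C = card {{i'\<in>R. rows_prop M C i i'} | i. i \<in> R}"

definition col_classes :: "(nat \<Rightarrow> nat \<Rightarrow> 'a::field) \<Rightarrow> nat set \<Rightarrow> nat set \<Rightarrow> nat" where
  "col_classes M R C = card {{j'\<in>C. cols_prop M R j j'} | j. j \<in> C}"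

definition crk :: "(nat \<Rightarrow> nat \<Rightarrow> 'a::field) \<Rightarrow> nat set \<Rightarrow> nat set \<Rightarrow> nat" where
  "crk M R C = min (row_classes M R C) (col_classes M R C)"

end

theory Submission
  imports Defs
begin

text \<open>If \<open>crk M \<ge> m\<close>, the \<open>m\<close> rows of \<open>M\<close> are pairwise non-proportional and \<open>M\<close> has a
set \<open>W\<close> of \<open>m\<close> pairwise non-proportional columns. Adding the rows one at a time, we keep a
set \<open>T\<close> of pairwise non-proportional columns, one per row added so far, on which the rows
added so far are pairwise non-proportional. If the new row is proportional on \<open>T\<close> to an
earlier row, add a column on which the two rows are not proportional with the same
factor; such a column is proportional to no column of \<open>T\<close>. Otherwise add a column of
\<open>W\<close> that is proportional to no column of \<open>T\<close>, which exists since \<open>T\<close> is smaller than \<open>W\<close>.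
Once all rows are added, \<open>T\<close> is a maximal minor of combinatorial rank \<open>m\<close>.\<close>

abbreviation pairwise_nonprop_rows :: "(nat \<Rightarrow> nat \<Rightarrow> 'a::field) \<Rightarrow> nat set \<Rightarrow> nat set \<Rightarrow> bool" where
  "pairwise_nonprop_rows M R C \<equiv> pairwise (\<lambda>i i'. \<not> rows_prop M C i i') R"

abbreviation pairwise_nonprop_cols :: "(nat \<Rightarrow> nat \<Rightarrow> 'a::field) \<Rightarrow> nat set \<Rightarrow> nat set \<Rightarrow> bool" where
  "pairwise_nonprop_cols M R C \<equiv> pairwise (\<lambda>j j'. \<not> cols_prop M R j j') C"

lemma rows_prop_refl: "rows_prop M C i i"
  unfolding rows_prop_def by (rule exI[of _ 1]) simp

lemma rows_prop_trans:
  assumes "rows_prop M C a b" "rows_prop M C b d"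
  shows "rows_prop M C a d"
proof -
  obtain c e where "\<forall>j\<in>C. M b j = c * M a j" "\<forall>j\<in>C. M d j = e * M b j"
    using assms unfolding rows_prop_def by blast
  then have "\<forall>j\<in>C. M d j = (e * c) * M a j" by simp
  then show ?thesis unfolding rows_prop_def by blast
qed

lemma rows_prop_sym:
  assumes "rows_prop M C a b" and "\<forall>j\<in>C. M b j \<noteq> 0"
  shows "rows_prop M C b a"
proof -
  obtain c where c: "\<forall>j\<in>C. M b j = c * M a j"
    using assms(1) unfolding rows_prop_def by blast
  have "\<forall>j\<in>C. M a j = inverse c * M b j"
  proof (cases "c = 0")
    case True
    then have "C = {}" using c assms(2) by auto
    then show ?thesis by simp
  qed (simp add: c)
  then show ?thesis unfolding rows_prop_def by blast
qed

lemma rows_prop_subset: "T \<subseteq> C \<Longrightarrow> rows_prop M C a b \<Longrightarrow> rows_prop M T a b"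
  unfolding rows_prop_def by blast

lemma cols_prop_transpose: "cols_prop M R j j' = rows_prop (\<lambda>i j. M j i) R j j'"
  unfolding cols_prop_def rows_prop_def by simp

lemma col_classes_transpose: "col_classes M R C = row_classes (\<lambda>i j. M j i) C R"
  unfolding col_classes_def row_classes_def cols_prop_transpose ..

lemma cols_prop_refl: "cols_prop M R j j"
  unfolding cols_prop_transpose by (rule rows_prop_refl)

lemma cols_prop_trans: "cols_prop M R a b \<Longrightarrow> cols_prop M R b d \<Longrightarrow> cols_prop M R a d"
  unfolding cols_prop_transpose by (rule rows_prop_trans)

lemma cols_prop_sym: "cols_prop M R a b \<Longrightarrow> \<forall>i\<in>R. M i b \<noteq> 0 \<Longrightarrow> cols_prop M R b a"
  unfolding cols_prop_transpose by (rule rows_prop_sym) simp_all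

lemma card_le_row_classes_iff:
  assumes "finite R" and nonzero: "\<forall>i\<in>R. \<forall>j\<in>C. M i j \<noteq> 0"
  shows "k \<le> row_classes M R C \<longleftrightarrow> (\<exists>S\<subseteq>R. card S = k \<and> pairwise_nonprop_rows M S C)"
proof -
  define cls where "cls i = {i'\<in>R. rows_prop M C i i'}" for i
  have classes: "row_classes M R C = card (cls ` R)"
    unfolding row_classes_def cls_def Setcompr_eq_image ..
  have cls_eq_iff: "cls i = cls i' \<longleftrightarrow> rows_prop M C i i'" if "i \<in> R" "i' \<in> R" for i i'
  proof
    assume "cls i = cls i'"
    then show "rows_prop M C i i'" using that rows_prop_refl unfolding cls_def by blast
  next
    assume "rows_prop M C i i'"
    moreover from this have "rows_prop M C i' i" using rows_prop_sym nonzero that by blast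
    ultimately show "cls i = cls i'" unfolding cls_def using rows_prop_trans by blast
  qed
  have inj_iff: "inj_on cls S \<longleftrightarrow> pairwise_nonprop_rows M S C" if "S \<subseteq> R" for S
    using that cls_eq_iff unfolding inj_on_def pairwise_def by (meson subsetD)
  show ?thesis
  proof
    assume "k \<le> row_classes M R C"
    obtain U where U: "U \<subseteq> R" "inj_on cls U" "cls ` R = cls ` U"
      using subset_image_inj[of "cls ` R" cls R, THEN iffD1, OF subset_refl] by blast
    have "card U = row_classes M R C"
      using classes U(2,3) by (simp add: card_image)
    then obtain S where S: "S \<subseteq> U" "card S = k"
      using \<open>k \<le> row_classes M R C\<close> obtain_subset_with_card_n by metis
    have "pairwise_nonprop_rows M S C"
      using inj_iff[of U] U(1,2) S(1) by (simp add: pairwise_subset)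
    then show "\<exists>S\<subseteq>R. card S = k \<and> pairwise_nonprop_rows M S C"
      using S U(1) by blast
  next
    assume "\<exists>S\<subseteq>R. card S = k \<and> pairwise_nonprop_rows M S C"
    then obtain S where "S \<subseteq> R" "card S = k" "pairwise_nonprop_rows M S C" by blast
    then have "card (cls ` S) = k" using inj_iff by (simp add: card_image)
    then show "k \<le> row_classes M R C"
      using classes card_mono[OF finite_imageI[OF \<open>finite R\<close>] image_mono[OF \<open>S \<subseteq> R\<close>], of cls]
      by simp
  qed
qed

lemma card_le_col_classes_iff:
  assumes "finite C" and "\<forall>i\<in>R. \<forall>j\<in>C. M i j \<noteq> 0"
  shows "k \<le> col_classes M R C \<longleftrightarrow> (\<exists>S\<subseteq>C. card S = k \<and> pairwise_nonprop_cols M R S)"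
  unfolding col_classes_transpose cols_prop_transpose
  using card_le_row_classes_iff[where M = "\<lambda>i j. M j i" and R = C and C = R] assms by simp

lemma card_le_crk_iff:
  assumes "finite R" "finite C" and "\<forall>i\<in>R. \<forall>j\<in>C. M i j \<noteq> 0"
  shows "k \<le> crk M R C \<longleftrightarrow>
    (\<exists>S\<subseteq>R. card S = k \<and> pairwise_nonprop_rows M S C) \<and>
    (\<exists>W\<subseteq>C. card W = k \<and> pairwise_nonprop_cols M R W)"
  unfolding crk_def using card_le_row_classes_iff[OF assms(1,3)] card_le_col_classes_iff[OF assms(2,3)]
  by simp

lemma pairwise_nonprop_rows_insert:
  assumes "\<forall>i\<in>R. \<forall>j\<in>C. M i j \<noteq> 0" and "pairwise_nonprop_rows M R C"
    and "\<forall>b\<in>R. \<not> rows_prop M C b r"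
  shows "pairwise_nonprop_rows M (insert r R) C"
  using assms by (auto simp: pairwise_insert dest: rows_prop_sym)

lemma pairwise_nonprop_cols_insert:
  assumes "\<forall>i\<in>R. \<forall>j\<in>C. M i j \<noteq> 0" and "pairwise_nonprop_cols M R C"
    and "\<forall>t\<in>C. \<not> cols_prop M R t q"
  shows "pairwise_nonprop_cols M R (insert q C)"
  using assms by (auto simp: pairwise_insert dest: cols_prop_sym)

lemma pairwise_nonprop_rows_superset:
  "pairwise_nonprop_rows M R T \<Longrightarrow> T \<subseteq> C \<Longrightarrow> pairwise_nonprop_rows M R C"
  unfolding pairwise_def using rows_prop_subset by blast

lemma exists_col_nonprop_to_all:
  assumes nonzero: "\<forall>i\<in>R. \<forall>j\<in>W. M i j \<noteq> 0" and "pairwise_nonprop_cols M R W"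
    and "finite T" and "card T < card W"
  obtains q where "q \<in> W" and "\<forall>t\<in>T. \<not> cols_prop M R t q"
proof (rule ccontr)
  assume "\<not> thesis"
  with that have "\<forall>w\<in>W. \<exists>t\<in>T. cols_prop M R t w" by blast
  then obtain f where f: "\<forall>w\<in>W. f w \<in> T \<and> cols_prop M R (f w) w"
    by metis
  have "inj_on f W"
  proof (rule inj_onI)
    fix w w' assume "w \<in> W" "w' \<in> W" "f w = f w'"
    then have "cols_prop M R w (f w)" and "cols_prop M R (f w) w'"
      using f nonzero cols_prop_sym by metis+
    then have "cols_prop M R w w'" by (rule cols_prop_trans)
    then show "w = w'" using assms(2) \<open>w \<in> W\<close> \<open>w' \<in> W\<close> unfolding pairwise_def by blast
  qed
  then have "card W \<le> card T"
    using f \<open>finite T\<close> by (intro card_inj_on_le) auto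
  then show False using \<open>card T < card W\<close> by simp
qed

lemma exists_col_separating_rows:
  assumes nonzero: "\<forall>i\<in>R. \<forall>j\<in>C. M i j \<noteq> 0" and "T \<subseteq> C" and "T \<noteq> {}"
    and "i \<in> R" "r \<in> R" and "rows_prop M T i r" and "\<not> rows_prop M C i r"
  obtains q where "q \<in> C" and "\<forall>t\<in>T. \<not> cols_prop M R t q"
    and "\<not> rows_prop M (insert q T) i r"
proof -
  obtain t0 where "t0 \<in> T" using \<open>T \<noteq> {}\<close> by blast
  obtain c where c: "\<forall>j\<in>T. M r j = c * M i j"
    using \<open>rows_prop M T i r\<close> unfolding rows_prop_def by blast
  obtain q where "q \<in> C" and q: "M r q \<noteq> c * M i q"
    using \<open>\<not> rows_prop M C i r\<close> unfolding rows_prop_def by blast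
  have "\<not> cols_prop M R t q" if "t \<in> T" for t
  proof
    assume "cols_prop M R t q"
    then obtain d where "\<forall>a\<in>R. M a q = d * M a t" unfolding cols_prop_def by blast
    then have "M r q = c * M i q" using c \<open>t \<in> T\<close> \<open>i \<in> R\<close> \<open>r \<in> R\<close> by simp
    with q show False ..
  qed
  moreover have "\<not> rows_prop M (insert q T) i r"
  proof
    assume "rows_prop M (insert q T) i r"
    then obtain e where e: "\<forall>j\<in>insert q T. M r j = e * M i j" unfolding rows_prop_def by blast
    have "M i t0 \<noteq> 0" using nonzero \<open>i \<in> R\<close> \<open>t0 \<in> T\<close> \<open>T \<subseteq> C\<close> by blast
    moreover have "e * M i t0 = c * M i t0" using e c \<open>t0 \<in> T\<close> by force
    ultimately have "e = c" by simp
    with e q show False by simp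
  qed
  ultimately show ?thesis using that \<open>q \<in> C\<close> by blast
qed

lemma exists_col_separating_new_row:
  assumes nonzero: "\<forall>i\<in>R. \<forall>j\<in>C. M i j \<noteq> 0" and "T \<subseteq> C" and "T \<noteq> {}"
    and "R' \<subseteq> R" "r \<in> R" and "pairwise_nonprop_rows M R' T"
    and "i \<in> R'" and "rows_prop M T i r" and "\<not> rows_prop M C i r"
  obtains q where "q \<in> C" and "\<forall>t\<in>T. \<not> cols_prop M R t q"
    and "\<forall>b\<in>R'. \<not> rows_prop M (insert q T) b r"
proof -
  obtain q where "q \<in> C" "\<forall>t\<in>T. \<not> cols_prop M R t q"
    and "\<not> rows_prop M (insert q T) i r"
    using \<open>i \<in> R'\<close> \<open>R' \<subseteq> R\<close>
    by (auto intro: exists_col_separating_rows[OF nonzero \<open>T \<subseteq> C\<close> \<open>T \<noteq> {}\<close> _ \<open>r \<in> R\<close>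
          \<open>rows_prop M T i r\<close> \<open>\<not> rows_prop M C i r\<close>])
  moreover have "\<not> rows_prop M (insert q T) b r" if "b \<in> R'" "b \<noteq> i" for b
  proof
    assume "rows_prop M (insert q T) b r"
    then have "rows_prop M T b r" by (rule rows_prop_subset[rotated]) blast
    moreover have "rows_prop M T r i"
      using rows_prop_sym[OF \<open>rows_prop M T i r\<close>] nonzero \<open>r \<in> R\<close> \<open>T \<subseteq> C\<close> by blast
    ultimately have "rows_prop M T b i" by (rule rows_prop_trans)
    then show False
      using \<open>pairwise_nonprop_rows M R' T\<close> that \<open>i \<in> R'\<close> unfolding pairwise_def by blast
  qed
  ultimately show ?thesis using that by blast
qed

lemma extend_nonprop_submatrix:
  assumes nonzero: "\<forall>i\<in>R. \<forall>j\<in>C. M i j \<noteq> 0" and "finite R"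
    and rows: "pairwise_nonprop_rows M R C"
    and W: "W \<subseteq> C" "card W = card R" "pairwise_nonprop_cols M R W"
    and "R' \<subseteq> R" "r \<in> R" "r \<notin> R'"
    and T: "T \<subseteq> C" "finite T" "card T = card R'"
      "pairwise_nonprop_cols M R T" "pairwise_nonprop_rows M R' T"
  obtains q where "q \<in> C" "q \<notin> T"
    and "pairwise_nonprop_cols M R (insert q T)"
    and "pairwise_nonprop_rows M (insert r R') (insert q T)"
proof -
  obtain q where "q \<in> C" and q_col: "\<forall>t\<in>T. \<not> cols_prop M R t q"
    and q_row: "\<forall>b\<in>R'. \<not> rows_prop M (insert q T) b r"
  proof (cases "\<exists>i\<in>R'. rows_prop M T i r")
    case True
    then obtain i where "i \<in> R'" and "rows_prop M T i r" by blast
    have "card R' \<noteq> 0"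
      using \<open>i \<in> R'\<close> finite_subset[OF \<open>R' \<subseteq> R\<close> \<open>finite R\<close>] by auto
    then have "T \<noteq> {}" using T(3) by auto
    have "\<not> rows_prop M C i r"
      using rows \<open>i \<in> R'\<close> \<open>R' \<subseteq> R\<close> \<open>r \<in> R\<close> \<open>r \<notin> R'\<close> unfolding pairwise_def by fast
    then show ?thesis
      using exists_col_separating_new_row[OF nonzero T(1) \<open>T \<noteq> {}\<close> \<open>R' \<subseteq> R\<close> \<open>r \<in> R\<close> T(5)
          \<open>i \<in> R'\<close> \<open>rows_prop M T i r\<close>] that
      by blast
  next
    case False
    have "R' \<subset> R" using \<open>R' \<subseteq> R\<close> \<open>r \<in> R\<close> \<open>r \<notin> R'\<close> by blast
    then have "card T < card W"
      using psubset_card_mono[OF \<open>finite R\<close>] T(3) W(2) by simp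
    moreover have "\<forall>i\<in>R. \<forall>j\<in>W. M i j \<noteq> 0" using nonzero W(1) by blast
    ultimately obtain q where "q \<in> W" "\<forall>t\<in>T. \<not> cols_prop M R t q"
      using exists_col_nonprop_to_all W(3) T(2) by blast
    moreover have "\<not> rows_prop M (insert q T) b r" if "b \<in> R'" for b
      using False that rows_prop_subset[of T "insert q T"] by blast
    ultimately show ?thesis using that W(1) by blast
  qed
  show ?thesis
  proof (rule that)
    show "q \<in> C" by fact
    show "q \<notin> T" using q_col cols_prop_refl by blast
    show "pairwise_nonprop_cols M R (insert q T)"
      using pairwise_nonprop_cols_insert[OF _ T(4) q_col] nonzero T(1) by blast
    have "\<forall>i\<in>R'. \<forall>j\<in>insert q T. M i j \<noteq> 0"
      using nonzero \<open>q \<in> C\<close> T(1) \<open>R' \<subseteq> R\<close> by blast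
    moreover have "pairwise_nonprop_rows M R' (insert q T)"
      using pairwise_nonprop_rows_superset[OF T(5)] by blast
    ultimately show "pairwise_nonprop_rows M (insert r R') (insert q T)"
      using q_row by (rule pairwise_nonprop_rows_insert)
  qed
qed

lemma exists_nonprop_square_submatrix:
  assumes nonzero: "\<forall>i\<in>R. \<forall>j\<in>C. M i j \<noteq> 0" and "finite R"
    and rows: "pairwise_nonprop_rows M R C"
    and W: "W \<subseteq> C" "card W = card R" "pairwise_nonprop_cols M R W"
  obtains T where "T \<subseteq> C" "card T = card R"
    and "pairwise_nonprop_cols M R T" and "pairwise_nonprop_rows M R T"
proof -
  have "\<exists>T\<subseteq>C. finite T \<and> card T = card R' \<and>
      pairwise_nonprop_cols M R T \<and> pairwise_nonprop_rows M R' T" if "R' \<subseteq> R" for R'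
    using finite_subset[OF that \<open>finite R\<close>] that
  proof (induction R' rule: finite_subset_induct')
    case empty
    show ?case by (intro exI[of _ "{}"]) simp
  next
    case (insert r R')
    then obtain T where T: "T \<subseteq> C" "finite T" "card T = card R'"
      "pairwise_nonprop_cols M R T" "pairwise_nonprop_rows M R' T" by blast
    obtain q where "q \<in> C" "q \<notin> T" "pairwise_nonprop_cols M R (insert q T)"
      "pairwise_nonprop_rows M (insert r R') (insert q T)"
      using extend_nonprop_submatrix[OF nonzero \<open>finite R\<close> rows W insert.hyps(3,2,4) T] by blast
    then show ?case
      using T insert.hyps by (intro exI[of _ "insert q T"]) simp
  qed
  then show ?thesis using that by blast
qed

theorem lemma5p19:
  fixes M :: "nat \<Rightarrow> nat \<Rightarrow> 'a::field" and m n :: nat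
  assumes "m < n"
    and "\<forall>i<m. \<forall>j<n. M i j \<noteq> 0"
    and "\<forall>S. S \<subseteq> {0..<n} \<and> card S = m \<longrightarrow> crk M {0..<m} S < m"
  shows "crk M {0..<m} {0..<n} < m"
proof (rule ccontr)
  let ?R = "{0..<m}" and ?C = "{0..<n}"
  have nonzero: "\<forall>i\<in>?R. \<forall>j\<in>?C. M i j \<noteq> 0" using assms(2) by simp
  assume "\<not> crk M ?R ?C < m"
  then have "m \<le> crk M ?R ?C" by simp
  then obtain S W where "S \<subseteq> ?R" "card S = m" "pairwise_nonprop_rows M S ?C"
    and W: "W \<subseteq> ?C" "card W = card ?R" "pairwise_nonprop_cols M ?R W"
    unfolding card_le_crk_iff[OF finite_atLeastLessThan finite_atLeastLessThan nonzero] by auto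
  then have rows: "pairwise_nonprop_rows M ?R ?C"
    using card_subset_eq[of ?R S] by simp
  obtain T where T: "T \<subseteq> ?C" "card T = card ?R"
    and "pairwise_nonprop_cols M ?R T" "pairwise_nonprop_rows M ?R T"
    by (rule exists_nonprop_square_submatrix[OF nonzero finite_atLeastLessThan rows W])
  have "finite T" using finite_subset[OF T(1)] by simp
  have nonzero_T: "\<forall>i\<in>?R. \<forall>j\<in>T. M i j \<noteq> 0" using nonzero T(1) by blast
  have "m \<le> crk M ?R T"
    unfolding card_le_crk_iff[OF finite_atLeastLessThan \<open>finite T\<close> nonzero_T]
    using T \<open>pairwise_nonprop_cols M ?R T\<close> \<open>pairwise_nonprop_rows M ?R T\<close>
    by (intro conjI exI[of _ ?R] exI[of _ T]) auto
  moreover have "crk M ?R T < m" using assms(3) T(1,2) by simp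
  ultimately show False by simp
qed

end
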